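(* Let $\mu_\xi,\mu_\rho\in\mathbb{R}$, $\sigma_\xi>0$, $\sigma_\rho>0$, and $\kappa_\rho=\mu_\rho+\sigma_\rho^2/2$. Let $\delta>0$. The equation $$(\sigma_\xi^2+\sigma_\rho^2x^2)f''(x)+2(\mu_\xi+\kappa_\rho x)f'(x)-2\delta f(x)=0$$ admits a solution $f:\mathbb{R}_+\to\mathbb{R}$ satisfying property (P): $f(x)>0$ for all $x\in\mathbb{R}_+$ and $f'(x)\le0$ for all $x\in(0,\infty)$. Moreover, if $\mu_\rho\le0$, every other solution $\tilde f$ of this equation satisfying (P) is of the form $\tilde f=Kf$ on $\mathbb{R}_+$ for some constant $K>0$.
   Context: $\mathbb{R}_+=[0,\infty)$. *)

theory Defs
  imports "HOL-Analysis.Analysis"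
begin

definition ode_sol ::
  "real \<Rightarrow> real \<Rightarrow> real \<Rightarrow> real \<Rightarrow> real \<Rightarrow>
   (real \<Rightarrow> real) \<Rightarrow> (real \<Rightarrow> real) \<Rightarrow> (real \<Rightarrow> real) \<Rightarrow> bool" where
  "ode_sol s_xi s_rho mu_xi kappa_rho delta f f' f'' \<longleftrightarrow>
    (\<forall>x\<ge>0. (f has_real_derivative f' x) (at x within {0..}) \<and>
            (f' has_real_derivative f'' x) (at x within {0..}) \<and>
            (s_xi^2 + s_rho^2 * x^2) * f'' x + 2 * (mu_xi + kappa_rho * x) * f' x
              - 2 * delta * f x = 0)"

definition prop_P :: "(real \<Rightarrow> real) \<Rightarrow> (real \<Rightarrow> real) \<Rightarrow> bool" where
  "prop_P f f' \<longleftrightarrow> (\<forall>x\<ge>0. f x > 0) \<and> (\<forall>x>0. f' x \<le> 0)"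

end

(*
  For two solutions f and g, Abel's identity makes exp B * (f g' - f' g) constant, where
  B' = a1/a2 is the ratio of the coefficients of f' and f''. exp (-B) is the scale density of the
  associated diffusion; for mu_rho <= 0 it decays no faster than 1/x. A nonzero constant would
  therefore force one of the two positive nonincreasing solutions to satisfy f' <= -c/(1 + x) and
  hence to become negative. So the Wronskian vanishes and g/f is constant.

  Let lam > 0 be the root of s_rho^2 lam^2 + 2 mu_rho lam = 2 delta and
  w = a2^(-lam) exp (-B). Then f x = integral of w (x + u) u^lam over u >= 0 solves the equation:
  on the truncated integrals the differential operator produces an exact u-derivative, i.e. a
  boundary term that vanishes at u = 0 and decays at infinity, and the truncated integrals converge
  uniformly together with their x-derivatives. f > 0 because w > 0, and f is nonincreasing because
  u^lam is increasing.
*)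

theory Submission
  imports Defs
begin

section \<open>Calculus on the half-line\<close>

lemma has_real_derivative_at_if_within_atLeast:
  fixes h :: "real \<Rightarrow> real"
  assumes "a < x" and "(h has_real_derivative D) (at x within {a..})"
  shows "(h has_real_derivative D) (at x)"
proof -
  have "(h has_real_derivative D) (at x within {a<..})"
    using assms(2) by (rule DERIV_subset) auto
  then show ?thesis
    using assms(1) by (simp add: at_within_open[of x "{a<..}"])
qed

lemma antitone_if_deriv_nonpos_atLeast:
  fixes h h' :: "real \<Rightarrow> real"
  assumes deriv: "\<And>x. a \<le> x \<Longrightarrow> (h has_real_derivative h' x) (at x within {a..})"
    and nonpos: "\<And>x. a < x \<Longrightarrow> h' x \<le> 0"
    and "a \<le> x" "x \<le> y"
  shows "h y \<le> h x"
proof (rule DERIV_nonpos_imp_decreasing_open[OF \<open>x \<le> y\<close>])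
  have "continuous_on {a..} h"
    by (rule DERIV_continuous_on) (use deriv in auto)
  then show "continuous_on {x..y} h"
    by (rule continuous_on_subset) (use \<open>a \<le> x\<close> in auto)
  fix t assume "x < t" "t < y"
  then have "a < t"
    using \<open>a \<le> x\<close> by simp
  then show "\<exists>D. (h has_real_derivative D) (at t) \<and> D \<le> 0"
    using has_real_derivative_at_if_within_atLeast[OF _ deriv] nonpos by force
qed

lemma deriv_nonpos_if_antitone_right:
  fixes h :: "real \<Rightarrow> real"
  assumes "(h has_real_derivative D) (at x)" and "\<And>y. x \<le> y \<Longrightarrow> h y \<le> h x"
  shows "D \<le> 0"
proof (rule ccontr)
  assume "\<not> D \<le> 0"
  then obtain d where "d > 0" and "\<And>t. 0 < t \<Longrightarrow> t < d \<Longrightarrow> h x < h (x + t)"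
    using DERIV_pos_inc_right[OF assms(1)] by force
  then have "h x < h (x + d/2)"
    by simp
  with assms(2)[of "x + d/2"] \<open>d > 0\<close> show False
    by simp
qed

text \<open>The function h + (c/b) ln(a + b x) is nonincreasing, while ln(a + b x) is unbounded.\<close>
lemma exists_nonpos_if_deriv_le_neg_reciprocal:
  fixes h h' :: "real \<Rightarrow> real" and a b c :: real
  assumes deriv: "\<And>x. 0 \<le> x \<Longrightarrow> (h has_real_derivative h' x) (at x within {0..})"
    and bound: "\<And>x. 0 < x \<Longrightarrow> h' x \<le> - c / (a + b * x)"
    and "a > 0" "b > 0" "c > 0"
  shows "\<exists>x\<ge>0. h x \<le> 0"
proof -
  define \<Phi> where "\<Phi> x = h x + c / b * ln (a + b * x)" for x
  define \<Phi>' where "\<Phi>' x = h' x + c / (a + b * x)" for x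
  have "(\<Phi> has_real_derivative \<Phi>' x) (at x within {0..})" if "0 \<le> x" for x
    unfolding \<Phi>_def[abs_def] \<Phi>'_def
    using deriv[OF that] that \<open>a > 0\<close> \<open>b > 0\<close>
    by (auto intro!: derivative_eq_intros simp: field_simps add_pos_nonneg)
  moreover have "\<Phi>' x \<le> 0" if "0 < x" for x
    using bound[OF that] by (simp add: \<Phi>'_def)
  ultimately have antitone: "\<Phi> y \<le> \<Phi> 0" if "0 \<le> y" for y
    using antitone_if_deriv_nonpos_atLeast[of 0 \<Phi> \<Phi>' 0 y] that by auto
  show ?thesis
  proof (cases "h 0 \<le> 0")
    case False
    define y where "y = a * (exp (b * h 0 / c) - 1) / b"
    have "y \<ge> 0"
      using assms(3-) False by (simp add: y_def)
    have "a + b * y = a * exp (b * h 0 / c)"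
      using \<open>b > 0\<close> by (simp add: y_def field_simps)
    then have "c / b * ln (a + b * y) = c / b * ln a + h 0"
      using assms(3-) by (simp add: ln_mult field_simps)
    then have "h y \<le> 0"
      using antitone[OF \<open>y \<ge> 0\<close>] by (simp add: \<Phi>_def)
    with \<open>y \<ge> 0\<close> show ?thesis
      by blast
  qed auto
qed

lemma abel_identity:
  fixes f f' f'' g g' g'' P Q R E :: "real \<Rightarrow> real"
  assumes "convex S"
    and f: "\<And>x. x \<in> S \<Longrightarrow> (f has_real_derivative f' x) (at x within S)"
      "\<And>x. x \<in> S \<Longrightarrow> (f' has_real_derivative f'' x) (at x within S)"
      "\<And>x. x \<in> S \<Longrightarrow> P x * f'' x + Q x * f' x + R x * f x = 0"
    and g: "\<And>x. x \<in> S \<Longrightarrow> (g has_real_derivative g' x) (at x within S)"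
      "\<And>x. x \<in> S \<Longrightarrow> (g' has_real_derivative g'' x) (at x within S)"
      "\<And>x. x \<in> S \<Longrightarrow> P x * g'' x + Q x * g' x + R x * g x = 0"
    and P: "\<And>x. x \<in> S \<Longrightarrow> P x \<noteq> 0"
    and E: "\<And>x. x \<in> S \<Longrightarrow> (E has_real_derivative Q x / P x * E x) (at x within S)"
  shows "\<exists>C. \<forall>x\<in>S. E x * (f x * g' x - f' x * g x) = C"
proof (rule has_field_derivative_zero_constant[OF \<open>convex S\<close>])
  fix x assume "x \<in> S"
  have "P x * (f x * g'' x - f'' x * g x) = - Q x * (f x * g' x - f' x * g x)"
    using f(3)[OF \<open>x \<in> S\<close>] g(3)[OF \<open>x \<in> S\<close>] by algebra
  then have "E x * (f x * g'' x - f'' x * g x) = - Q x / P x * E x * (f x * g' x - f' x * g x)"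
    using P[OF \<open>x \<in> S\<close>] by (simp add: field_simps) (metis distrib_left)
  then show "((\<lambda>x. E x * (f x * g' x - f' x * g x)) has_real_derivative 0) (at x within S)"
    using \<open>x \<in> S\<close>
    by (auto intro!: derivative_eq_intros E f g simp: algebra_simps)
qed

lemma const_multiple_if_wronskian_zero:
  fixes f f' g g' :: "real \<Rightarrow> real"
  assumes "convex S"
    and "\<And>x. x \<in> S \<Longrightarrow> (f has_real_derivative f' x) (at x within S)"
    and "\<And>x. x \<in> S \<Longrightarrow> (g has_real_derivative g' x) (at x within S)"
    and "\<And>x. x \<in> S \<Longrightarrow> f x \<noteq> 0"
    and "\<And>x. x \<in> S \<Longrightarrow> f x * g' x - f' x * g x = 0"
  shows "\<exists>K. \<forall>x\<in>S. g x = K * f x"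
proof -
  have "\<exists>K. \<forall>x\<in>S. g x / f x = K"
  proof (rule has_field_derivative_zero_constant[OF \<open>convex S\<close>])
    fix x assume "x \<in> S"
    then show "((\<lambda>x. g x / f x) has_real_derivative 0) (at x within S)"
      using assms(2-)[OF \<open>x \<in> S\<close>]
      by (auto intro!: derivative_eq_intros simp: algebra_simps)
  qed
  then show ?thesis
    using assms(4) by (metis nonzero_eq_divide_eq)
qed

lemma has_integral_one_plus_powr:
  fixes r a b :: real
  assumes "r \<noteq> 1" "-1 < a" "a \<le> b"
  shows "((\<lambda>u. (1 + u) powr (- r)) has_integral
           ((1 + a) powr (1 - r) - (1 + b) powr (1 - r)) / (r - 1)) {a..b}"
proof -
  define F where "F u = - ((1 + u) powr (1 - r)) / (r - 1)" for u :: real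
  have "((\<lambda>u. (1 + u) powr (- r)) has_integral F b - F a) {a..b}"
  proof (rule fundamental_theorem_of_calculus[OF \<open>a \<le> b\<close>])
    fix x assume "x \<in> {a..b}"
    then have "1 + x > 0"
      using \<open>-1 < a\<close> by auto
    moreover have "((\<lambda>u. 1 + u) has_real_derivative 1) (at x)"
      by (auto intro!: derivative_eq_intros)
    ultimately have
      "((\<lambda>u. (1 + u) powr (1 - r)) has_real_derivative (1 - r) * (1 + x) powr (- r)) (at x)"
      using DERIV_fun_powr[of "\<lambda>u. 1 + u" 1 x "1 - r"] by (auto intro: derivative_eq_intros)
    then have "(F has_real_derivative - ((1 - r) * (1 + x) powr (- r)) / (r - 1)) (at x)"
      unfolding F_def by (intro DERIV_cdivide DERIV_minus)
    moreover have "- ((1 - r) * (1 + x) powr (- r)) / (r - 1) = (1 + x) powr (- r)"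
      using \<open>r \<noteq> 1\<close> by (simp add: field_simps)
    ultimately have "(F has_real_derivative (1 + x) powr (- r)) (at x)"
      by simp
    then show "(F has_vector_derivative (1 + x) powr (- r)) (at x within {a..b})"
      by (simp add: has_real_derivative_iff_has_vector_derivative[symmetric] has_field_derivative_at_within)
  qed
  then show ?thesis
    by (simp add: F_def diff_divide_distrib)
qed

lemma uniform_limit_integral_atLeast:
  fixes k :: "'a \<Rightarrow> real \<Rightarrow> real"
  assumes cont: "\<And>x. x \<in> S \<Longrightarrow> continuous_on {0..} (k x)"
    and bound: "\<And>x u. x \<in> S \<Longrightarrow> 0 \<le> u \<Longrightarrow> \<bar>k x u\<bar> \<le> C * (1 + u) powr (- r)"
    and "r > 1"
  shows "\<exists>L. uniform_limit S (\<lambda>n x. integral {0..real n} (k x)) L sequentially"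
proof -
  define B where "B m = C / (r - 1) * (1 + real m) powr (1 - r)" for m :: nat
  have integrable: "k x integrable_on {a..b}" if "x \<in> S" "0 \<le> a" for x a b
    using cont[OF that(1)] that(2)
    by (intro integrable_continuous_interval) (auto elim: continuous_on_subset)
  have tail: "\<bar>integral {0..real n} (k x) - integral {0..real m} (k x)\<bar> \<le> B m"
    if "x \<in> S" "m \<le> n" for x m n
  proof -
    have mn: "real m \<le> real n"
      using that(2) by simp
    have dominant: "((\<lambda>u. C * (1 + u) powr (- r)) has_integral
        C * (((1 + real m) powr (1 - r) - (1 + real n) powr (1 - r)) / (r - 1))) {real m..real n}"
      using has_integral_one_plus_powr[of r "real m" "real n"] mn \<open>r > 1\<close>
      by (intro has_integral_mult_right) auto
    have "integral {0..real n} (k x) - integral {0..real m} (k x) = integral {real m..real n} (k x)"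
      using Henstock_Kurzweil_Integration.integral_combine[of 0 "real m" "real n" "k x"]
        integrable[OF that(1)] mn by simp
    also have "\<bar>\<dots>\<bar> \<le> integral {real m..real n} (\<lambda>u. C * (1 + u) powr (- r))"
      using Henstock_Kurzweil_Integration.integral_norm_bound_integral[OF
          integrable[OF that(1) of_nat_0_le_iff] has_integral_integrable[OF dominant]]
        bound[OF that(1)] by auto
    also have "\<dots> = C * (((1 + real m) powr (1 - r) - (1 + real n) powr (1 - r)) / (r - 1))"
      by (rule integral_unique[OF dominant])
    also have "\<dots> \<le> B m"
    proof -
      have "0 \<le> C"
        using bound[OF that(1), of 0] by simp
      then show ?thesis
        using \<open>r > 1\<close> by (auto simp: B_def intro!: mult_left_mono divide_right_mono)
    qed
    finally show ?thesis .
  qed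
  have "filterlim (\<lambda>m. 1 + real m) at_top sequentially"
    by (intro filterlim_tendsto_add_at_top[OF tendsto_const] filterlim_real_sequentially)
  then have "B \<longlonglongrightarrow> 0"
    unfolding B_def using \<open>r > 1\<close> by (intro tendsto_mult_right_zero tendsto_neg_powr) auto
  have "uniformly_Cauchy_on S (\<lambda>n x. integral {0..real n} (k x))"
  proof (rule uniformly_Cauchy_onI')
    fix e :: real assume "e > 0"
    then obtain M where M: "\<And>m. M \<le> m \<Longrightarrow> B m < e"
      using order_tendstoD(2)[OF \<open>B \<longlonglongrightarrow> 0\<close> \<open>e > 0\<close>] by (auto simp: eventually_sequentially)
    show "\<exists>M. \<forall>x\<in>S. \<forall>m\<ge>M. \<forall>n>m.
        dist (integral {0..real m} (k x)) (integral {0..real n} (k x)) < e"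
    proof (intro exI ballI allI impI)
      fix x m n assume "x \<in> S" "M \<le> m" "m < n"
      then have "\<bar>integral {0..real n} (k x) - integral {0..real m} (k x)\<bar> \<le> B m"
        by (intro tail) auto
      with M[OF \<open>M \<le> m\<close>] show "dist (integral {0..real m} (k x)) (integral {0..real n} (k x)) < e"
        by (simp add: dist_real_def abs_minus_commute)
    qed
  qed
  then show ?thesis
    using Cauchy_uniformly_convergent unfolding uniformly_convergent_on_def by blast
qed

lemma has_field_derivative_sequence:
  fixes f f' :: "nat \<Rightarrow> 'a::{real_normed_field,banach} \<Rightarrow> 'a"
  assumes "convex S"
    and deriv: "\<And>n x. x \<in> S \<Longrightarrow> (f n has_field_derivative f' n x) (at x within S)"
    and unif: "uniform_limit S f' g' sequentially"
    and "x0 \<in> S" and "convergent (\<lambda>n. f n x0)"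
  shows "\<exists>g. \<forall>x\<in>S. (\<lambda>n. f n x) \<longlonglongrightarrow> g x \<and> (g has_field_derivative g' x) (at x within S)"
proof -
  obtain l where "(\<lambda>n. f n x0) \<longlonglongrightarrow> l"
    using \<open>convergent (\<lambda>n. f n x0)\<close> by (auto simp: convergent_def)
  moreover have "\<forall>\<^sub>F n in sequentially. \<forall>x\<in>S. \<forall>h. norm (f' n x * h - g' x * h) \<le> e * norm h"
    if "e > 0" for e :: real
    using uniform_limitD[OF unif that]
  proof eventually_elim
    case (elim n)
    show ?case
    proof (intro ballI allI)
      fix x h assume "x \<in> S"
      then have "norm (f' n x - g' x) \<le> e"
        using elim by (auto simp: dist_norm)
      then show "norm (f' n x * h - g' x * h) \<le> e * norm h"
        by (simp add: left_diff_distrib[symmetric] norm_mult mult_right_mono)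
    qed
  qed
  ultimately show ?thesis
    using has_derivative_sequence[OF \<open>convex S\<close> _ _ \<open>x0 \<in> S\<close>,
        of f "\<lambda>n x h. f' n x * h" "\<lambda>x h. g' x * h"] deriv
    by (auto simp: has_field_derivative_def)
qed

section \<open>Truncated power transforms\<close>

definition trunc_transform :: "real \<Rightarrow> (real \<Rightarrow> real) \<Rightarrow> nat \<Rightarrow> real \<Rightarrow> real" where
  "trunc_transform lam h n x = integral {0..real n} (\<lambda>u. h (x + u) * u powr lam)"

lemma continuous_on_shifted_powr_kernel_Times:
  fixes h :: "real \<Rightarrow> real"
  assumes "continuous_on UNIV h" "lam > 0"
  shows "continuous_on ({0..} \<times> {0..}) (\<lambda>(x, u). h (x + u) * u powr lam)"
proof -
  have "continuous_on ({0..} \<times> {0..}) (\<lambda>z. h (fst z + snd z))"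
    by (rule continuous_on_compose2[OF assms(1)]) (auto intro!: continuous_intros)
  moreover have "continuous_on ({0..} \<times> {0..}) (\<lambda>z. snd z powr lam :: real)"
    using \<open>lam > 0\<close> by (intro continuous_on_powr') (auto intro!: continuous_intros)
  ultimately show ?thesis
    by (auto simp: case_prod_unfold intro: continuous_on_mult)
qed

lemma continuous_on_shifted_powr_kernel:
  fixes h :: "real \<Rightarrow> real"
  assumes "continuous_on UNIV h" "lam > 0" "0 \<le> x"
  shows "continuous_on {0..} (\<lambda>u. h (x + u) * u powr lam)"
proof -
  have "continuous_on {0..} (\<lambda>u. h (x + u))"
    by (rule continuous_on_compose2[OF assms(1)]) (auto intro!: continuous_intros)
  moreover have "continuous_on {0..} (\<lambda>u. u powr lam :: real)"
    using \<open>lam > 0\<close> by (intro continuous_on_powr') (auto intro!: continuous_intros)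
  ultimately show ?thesis
    by (rule continuous_on_mult)
qed

lemma shifted_powr_kernel_integrable:
  fixes h :: "real \<Rightarrow> real"
  assumes "continuous_on UNIV h" "lam > 0" "0 \<le> x" "0 \<le> a"
  shows "(\<lambda>u. h (x + u) * u powr lam) integrable_on {a..b}"
  using continuous_on_shifted_powr_kernel[OF assms(1-3)] \<open>0 \<le> a\<close>
  by (intro integrable_continuous_interval) (auto elim: continuous_on_subset)

lemma trunc_transform_deriv:
  fixes h h' :: "real \<Rightarrow> real"
  assumes deriv: "\<And>s. (h has_real_derivative h' s) (at s)"
    and "continuous_on UNIV h'" "lam > 0" "0 \<le> x"
  shows "(trunc_transform lam h n has_real_derivative trunc_transform lam h' n x) (at x within {0..})"
proof -
  have "continuous_on UNIV h"
    using deriv by (intro has_real_derivative_imp_continuous_on) auto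
  have "((\<lambda>x. integral (cbox 0 (real n)) (\<lambda>u. h (x + u) * u powr lam)) has_real_derivative
      integral (cbox 0 (real n)) (\<lambda>u. h' (x + u) * u powr lam)) (at x within {0..})"
  proof (rule leibniz_rule_field_derivative)
    fix y u :: real
    have "((\<lambda>y. h (y + u)) has_real_derivative h' (y + u) * 1) (at y within {0..})"
      by (rule DERIV_chain2[OF deriv]) (auto intro!: derivative_eq_intros)
    then show "((\<lambda>y. h (y + u) * u powr lam) has_real_derivative h' (y + u) * u powr lam)
        (at y within {0..})"
      using DERIV_cmult_right by fastforce
  next
    fix y :: real assume "y \<in> {0..}"
    then show "(\<lambda>u. h (y + u) * u powr lam) integrable_on cbox 0 (real n)"
      unfolding cbox_interval
      by (intro shifted_powr_kernel_integrable[OF \<open>continuous_on UNIV h\<close> \<open>lam > 0\<close>]) auto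
  next
    show "continuous_on ({0..} \<times> cbox 0 (real n)) (\<lambda>(y, u). h' (y + u) * u powr lam)"
      using continuous_on_shifted_powr_kernel_Times[OF assms(2,3)] by (rule continuous_on_subset) auto
  qed (use \<open>0 \<le> x\<close> in auto)
  then show ?thesis
    by (simp add: trunc_transform_def[abs_def])
qed

lemma trunc_transform_uniform_limit:
  fixes h :: "real \<Rightarrow> real"
  assumes "continuous_on UNIV h" "lam > 0" "q > lam + 1"
    and bound: "\<And>s. 0 \<le> s \<Longrightarrow> \<bar>h s\<bar> \<le> C * (1 + s) powr (- q)"
  shows "\<exists>L. uniform_limit {0..} (trunc_transform lam h) L sequentially"
proof -
  have "\<bar>h (x + u) * u powr lam\<bar> \<le> C * (1 + u) powr (- (q - lam))" if "0 \<le> x" "0 \<le> u" for x u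
  proof -
    have "0 \<le> C"
      using bound[of 0] by simp
    have "(1 + (x + u)) powr (- q) \<le> (1 + u) powr (- q)"
      using that \<open>q > lam + 1\<close> \<open>lam > 0\<close> by (intro powr_mono2') auto
    then have "\<bar>h (x + u)\<bar> \<le> C * (1 + u) powr (- q)"
      using bound[of "x + u"] that \<open>0 \<le> C\<close> by (meson add_nonneg_nonneg mult_left_mono order_trans)
    moreover have "u powr lam \<le> (1 + u) powr lam"
      using that \<open>lam > 0\<close> by (intro powr_mono2) auto
    ultimately have "\<bar>h (x + u) * u powr lam\<bar> \<le> C * (1 + u) powr (- q) * (1 + u) powr lam"
      by (auto simp: abs_mult intro: mult_mono)
    then show ?thesis
      by (simp add: powr_add[symmetric] mult.assoc)
  qed
  then show ?thesis
    using uniform_limit_integral_atLeast[of "{0..}" "\<lambda>x u. h (x + u) * u powr lam" C "q - lam"]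
      continuous_on_shifted_powr_kernel[OF assms(1,2)] \<open>q > lam + 1\<close>
    by (simp add: trunc_transform_def[abs_def])
qed

lemma incseq_trunc_transform:
  fixes h :: "real \<Rightarrow> real"
  assumes "continuous_on UNIV h" "lam > 0" "\<And>s. 0 \<le> h s" "0 \<le> x"
  shows "incseq (\<lambda>n. trunc_transform lam h n x)"
  unfolding trunc_transform_def
  by (intro incseq_SucI integral_subset_le shifted_powr_kernel_integrable[OF assms(1,2,4)])
    (use assms(3) in auto)

lemma trunc_transform_shift_le:
  fixes h :: "real \<Rightarrow> real"
  assumes "continuous_on UNIV h" "lam > 0" "\<And>s. 0 \<le> h s"
    and "0 \<le> x" "x \<le> y" "real n + (y - x) \<le> real m"
  shows "trunc_transform lam h n y \<le> trunc_transform lam h m x"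
proof -
  define d where "d = y - x"
  have "0 \<le> d"
    using \<open>x \<le> y\<close> by (simp add: d_def)
  have "trunc_transform lam h n y
      = integral {d - d..real n + d - d} (\<lambda>u. h (x + (u + d)) * (u + d - d) powr lam)"
    by (simp add: trunc_transform_def d_def algebra_simps)
  also have "\<dots> = integral {d..real n + d} (\<lambda>v. h (x + v) * (v - d) powr lam)"
    by (rule integral_shift_real_ivl)
  also have "\<dots> \<le> integral {d..real n + d} (\<lambda>v. h (x + v) * v powr lam)"
  proof (rule integral_le)
    have "continuous_on {d..real n + d} (\<lambda>v. h (x + v) * (v - d) powr lam)"
      using \<open>lam > 0\<close>
      by (intro continuous_on_mult continuous_on_powr' continuous_on_compose2[OF assms(1)])
        (auto intro!: continuous_intros)
    then show "(\<lambda>v. h (x + v) * (v - d) powr lam) integrable_on {d..real n + d}"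
      by (rule integrable_continuous_interval)
    show "(\<lambda>v. h (x + v) * v powr lam) integrable_on {d..real n + d}"
      by (rule shifted_powr_kernel_integrable[OF assms(1,2,4) \<open>0 \<le> d\<close>])
  qed (use assms(2,3) \<open>0 \<le> d\<close> in \<open>auto intro!: mult_left_mono powr_mono2\<close>)
  also have "\<dots> \<le> trunc_transform lam h m x"
    unfolding trunc_transform_def
    by (intro integral_subset_le shifted_powr_kernel_integrable[OF assms(1,2,4)])
      (use assms(3,6) \<open>0 \<le> d\<close> in \<open>auto simp: d_def\<close>)
  finally show ?thesis .
qed

lemma trunc_transform_pos:
  fixes h :: "real \<Rightarrow> real"
  assumes "continuous_on UNIV h" "lam > 0" "\<And>s. 0 < h s" "0 \<le> x"
  shows "0 < trunc_transform lam h 2 x"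
proof -
  obtain s0 where "s0 \<in> {x + 1..x + 2}" and min: "\<And>s. s \<in> {x + 1..x + 2} \<Longrightarrow> h s0 \<le> h s"
    using continuous_attains_inf[of "{x + 1..x + 2}" h] continuous_on_subset[OF assms(1)] by auto
  have "0 < h s0"
    by (rule assms(3))
  also have "\<dots> = integral {1..2::real} (\<lambda>_. h s0)"
    by simp
  also have "\<dots> \<le> integral {1..2::real} (\<lambda>u. h (x + u) * u powr lam)"
  proof (rule integral_le)
    show "(\<lambda>u. h (x + u) * u powr lam) integrable_on {1..2}"
      by (rule shifted_powr_kernel_integrable[OF assms(1,2,4)]) simp
    fix u :: real assume "u \<in> {1..2}"
    then have "h s0 \<le> h (x + u)"
      using min by auto
    also have "\<dots> \<le> h (x + u) * u powr lam"
      using \<open>u \<in> {1..2}\<close> \<open>lam > 0\<close> assms(3)[of "x + u"]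
      by (simp add: mult_le_cancel_left1 ge_one_powr_ge_zero)
    finally show "h s0 \<le> h (x + u) * u powr lam" .
  qed (rule integrable_const_ivl)
  also have "\<dots> \<le> trunc_transform lam h 2 x"
    unfolding trunc_transform_def using assms(2,3)
    by (intro integral_subset_le shifted_powr_kernel_integrable[OF assms(1,2,4)])
      (auto intro!: mult_nonneg_nonneg intro: less_imp_le)
  finally show ?thesis .
qed

lemma trunc_transform_limit_antitone:
  fixes h :: "real \<Rightarrow> real"
  assumes "continuous_on UNIV h" "lam > 0" "\<And>s. 0 \<le> h s"
    and lim: "\<And>x. 0 \<le> x \<Longrightarrow> (\<lambda>n. trunc_transform lam h n x) \<longlonglongrightarrow> f x"
    and "0 \<le> x" "x \<le> y"
  shows "f y \<le> f x"
proof (rule LIMSEQ_le_const2[OF lim])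
  show "0 \<le> y"
    using assms(5,6) by simp
  show "\<exists>N. \<forall>n\<ge>N. trunc_transform lam h n y \<le> f x"
  proof (intro exI allI impI)
    fix n :: nat
    define m where "m = nat \<lceil>real n + (y - x)\<rceil>"
    have "trunc_transform lam h n y \<le> trunc_transform lam h m x"
      by (rule trunc_transform_shift_le[OF assms(1-3,5,6)]) (simp add: m_def real_nat_ceiling_ge)
    also have "\<dots> \<le> f x"
      by (rule incseq_le[OF incseq_trunc_transform[OF assms(1-3,5)] lim[OF assms(5)]])
    finally show "trunc_transform lam h n y \<le> f x" .
  qed
qed

lemma trunc_transform_limit_pos:
  fixes h :: "real \<Rightarrow> real"
  assumes "continuous_on UNIV h" "lam > 0" "\<And>s. 0 < h s"
    and lim: "(\<lambda>n. trunc_transform lam h n x) \<longlonglongrightarrow> L" and "0 \<le> x"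
  shows "0 < L"
proof -
  have "incseq (\<lambda>n. trunc_transform lam h n x)"
    using assms(3) by (intro incseq_trunc_transform[OF assms(1,2) _ assms(5)]) (simp add: less_imp_le)
  then show ?thesis
    using trunc_transform_pos[OF assms(1-3,5)] incseq_le[OF _ lim, of 2] by linarith
qed

locale half_line_ode =
  fixes s_xi s_rho mu_xi mu_rho kappa delta :: real
  assumes s_xi_pos: "s_xi > 0" and s_rho_pos: "s_rho > 0"
    and kappa_eq: "kappa = mu_rho + s_rho^2 / 2" and delta_pos: "delta > 0"
begin

definition a2 :: "real \<Rightarrow> real" where
  "a2 x = s_xi^2 + s_rho^2 * x^2"

definition a1 :: "real \<Rightarrow> real" where
  "a1 x = 2 * (mu_xi + kappa * x)"

lemma ode_sol_iff:
  "ode_sol s_xi s_rho mu_xi kappa delta f f' f'' \<longleftrightarrow>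
    (\<forall>x\<ge>0. (f has_real_derivative f' x) (at x within {0..}) \<and>
            (f' has_real_derivative f'' x) (at x within {0..}) \<and>
            a2 x * f'' x + a1 x * f' x - 2 * delta * f x = 0)"
  by (simp add: ode_sol_def a2_def a1_def)

lemma a2_pos: "a2 x > 0"
  using s_xi_pos by (simp add: a2_def add_pos_nonneg)

lemma a2_nonzero: "a2 x \<noteq> 0"
  using a2_pos[of x] by simp

lemma continuous_on_a2: "continuous_on S a2"
  unfolding a2_def[abs_def] by (intro continuous_intros)

lemma a2_ge: "s_xi^2 \<le> a2 x"
  by (simp add: a2_def)

lemma a2_deriv [derivative_intros]:
  "(g has_real_derivative g') (at x within S) \<Longrightarrow>
    ((\<lambda>x. a2 (g x)) has_real_derivative 2 * s_rho^2 * g x * g') (at x within S)"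
  unfolding a2_def by (auto intro!: derivative_eq_intros)

definition theta :: real where
  "theta = 2 * mu_xi / (s_xi * s_rho)"

text \<open>\<open>exp (- scale_exponent)\<close> is the scale density of the diffusion with generator
  \<open>a2/2 D\<^sup>2 + a1/2 D\<close>.\<close>
definition scale_exponent :: "real \<Rightarrow> real" where
  "scale_exponent x = kappa / s_rho^2 * ln (a2 x) + theta * arctan (s_rho * x / s_xi)"

lemma scale_exponent_has_derivative: "(scale_exponent has_real_derivative a1 x / a2 x) (at x)"
proof -
  have "((\<lambda>x. ln (a2 x)) has_real_derivative 2 * s_rho^2 * x / a2 x) (at x)"
    using a2_pos[of x] by (auto intro!: derivative_eq_intros simp: field_simps)
  moreover have "((\<lambda>x. arctan (s_rho * x / s_xi)) has_real_derivative s_rho * s_xi / a2 x) (at x)"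
    using s_xi_pos
    by (auto intro!: derivative_eq_intros simp: a2_def field_simps power2_eq_square)
  ultimately have "(scale_exponent has_real_derivative
      kappa / s_rho^2 * (2 * s_rho^2 * x / a2 x) + theta * (s_rho * s_xi / a2 x)) (at x)"
    unfolding scale_exponent_def[abs_def] by (intro DERIV_add DERIV_cmult)
  moreover have "kappa / s_rho^2 * (2 * s_rho^2 * x / a2 x) + theta * (s_rho * s_xi / a2 x) = a1 x / a2 x"
    using s_xi_pos s_rho_pos a2_pos[of x] by (simp add: theta_def a1_def field_simps)
  ultimately show ?thesis
    by simp
qed

lemma scale_exponent_deriv [derivative_intros]:
  "(g has_real_derivative g') (at x within S) \<Longrightarrow>
    ((\<lambda>x. scale_exponent (g x)) has_real_derivative a1 (g x) / a2 (g x) * g') (at x within S)"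
  by (rule DERIV_chain2[OF scale_exponent_has_derivative])

lemma abs_theta_arctan_le: "\<bar>theta * arctan y\<bar> \<le> \<bar>theta\<bar> * pi / 2"
proof -
  have "\<bar>arctan y\<bar> \<le> pi / 2"
    using arctan_bounded[of y] by linarith
  then have "\<bar>theta\<bar> * \<bar>arctan y\<bar> \<le> \<bar>theta\<bar> * (pi / 2)"
    by (rule mult_left_mono) simp
  then show ?thesis
    by (simp add: abs_mult)
qed

lemma exp_neg_scale_exponent_eq:
  "exp (- scale_exponent x) = a2 x powr (- kappa / s_rho^2) * exp (- theta * arctan (s_rho * x / s_xi))"
  using a2_pos[of x] by (simp add: scale_exponent_def powr_def exp_diff exp_minus field_simps)

subsection \<open>Uniqueness\<close>

text \<open>The only place where \<open>mu_rho \<le> 0\<close> is used: the scale density is then not integrable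
  at infinity.\<close>
lemma scale_density_lower_bound:
  assumes "mu_rho \<le> 0"
  obtains \<gamma> where "\<gamma> > 0" "\<And>x. 0 \<le> x \<Longrightarrow> \<gamma> / (s_xi + s_rho * x) \<le> exp (- scale_exponent x)"
proof
  define k where "k = kappa / s_rho^2"
  have "k \<le> 1/2"
    using assms s_rho_pos by (simp add: k_def kappa_eq field_simps)
  show "(s_xi^2) powr (1/2 - k) * exp (- \<bar>theta\<bar> * pi / 2) > 0"
    using s_xi_pos by simp
  fix x :: real assume "0 \<le> x"
  have "sqrt (a2 x) \<le> s_xi + s_rho * x"
    using s_xi_pos s_rho_pos \<open>0 \<le> x\<close>
    by (intro real_le_lsqrt) (auto simp: a2_def power2_eq_square algebra_simps)
  then have "1 / (s_xi + s_rho * x) \<le> a2 x powr (- 1/2)"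
    using a2_pos[of x] by (simp add: powr_minus_divide powr_half_sqrt frac_le)
  moreover have "(s_xi^2) powr (1/2 - k) \<le> a2 x powr (1/2 - k)"
    using \<open>k \<le> 1/2\<close> a2_ge by (intro powr_mono2) auto
  moreover have "exp (- \<bar>theta\<bar> * pi / 2) \<le> exp (- theta * arctan (s_rho * x / s_xi))"
    using abs_theta_arctan_le[of "s_rho * x / s_xi"] by simp
  ultimately have "1 / (s_xi + s_rho * x) * (s_xi^2) powr (1/2 - k) * exp (- \<bar>theta\<bar> * pi / 2)
      \<le> a2 x powr (- 1/2) * a2 x powr (1/2 - k) * exp (- theta * arctan (s_rho * x / s_xi))"
    by (intro mult_mono) auto
  also have "\<dots> = exp (- scale_exponent x)"
    by (simp add: exp_neg_scale_exponent_eq k_def powr_add[symmetric])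
  finally show "(s_xi^2) powr (1/2 - k) * exp (- \<bar>theta\<bar> * pi / 2) / (s_xi + s_rho * x)
      \<le> exp (- scale_exponent x)"
    by simp
qed

lemma wronskian_ne_pos_multiple_of_scale_density:
  assumes "mu_rho \<le> 0" and "C > 0"
    and f: "\<And>x. 0 \<le> x \<Longrightarrow> (f has_real_derivative f' x) (at x within {0..})" "prop_P f f'"
    and g: "\<And>x. 0 \<le> x \<Longrightarrow> (g has_real_derivative g' x) (at x within {0..})" "prop_P g g'"
    and wronskian: "\<And>x. 0 \<le> x \<Longrightarrow> f x * g' x - f' x * g x = C * exp (- scale_exponent x)"
  shows False
proof -
  obtain \<gamma> where "\<gamma> > 0" and \<gamma>: "\<And>x. 0 \<le> x \<Longrightarrow> \<gamma> / (s_xi + s_rho * x) \<le> exp (- scale_exponent x)"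
    using scale_density_lower_bound[OF \<open>mu_rho \<le> 0\<close>] by blast
  have f_pos: "\<And>x. 0 \<le> x \<Longrightarrow> 0 < f x" and g_pos: "\<And>x. 0 \<le> x \<Longrightarrow> 0 < g x"
    and f'_nonpos: "\<And>x. 0 < x \<Longrightarrow> f' x \<le> 0" and g'_nonpos: "\<And>x. 0 < x \<Longrightarrow> g' x \<le> 0"
    using f(2) g(2) by (auto simp: prop_P_def)
  have bound: "f' x \<le> - (C * \<gamma> / g 0) / (s_xi + s_rho * x)" if "0 < x" for x
  proof -
    have "g x \<le> g 0"
      using antitone_if_deriv_nonpos_atLeast[OF g(1) g'_nonpos, of 0 x] that by simp
    have "C * \<gamma> / (s_xi + s_rho * x) \<le> C * exp (- scale_exponent x)"
      using mult_left_mono[OF \<gamma>[of x], of C] \<open>C > 0\<close> that by simp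
    also have "\<dots> \<le> - f' x * g x"
      using wronskian[of x] mult_nonneg_nonpos[OF less_imp_le[OF f_pos[of x]] g'_nonpos[OF that]] that
      by simp
    also have "\<dots> \<le> - f' x * g 0"
      using mult_left_mono[OF \<open>g x \<le> g 0\<close>, of "- f' x"] f'_nonpos[OF that] by simp
    finally have "C * \<gamma> / (s_xi + s_rho * x) / g 0 \<le> - f' x"
      using g_pos[of 0] by (simp add: pos_divide_le_eq del: divide_divide_eq_left)
    then show ?thesis
      by (simp add: mult.commute)
  qed
  have "C * \<gamma> / g 0 > 0"
    using \<open>C > 0\<close> \<open>\<gamma> > 0\<close> g_pos[of 0] by simp
  then obtain x where "0 \<le> x" "f x \<le> 0"
    using exists_nonpos_if_deriv_le_neg_reciprocal[OF f(1) bound s_xi_pos s_rho_pos] by blast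
  with f_pos show False
    by (simp add: not_less[symmetric])
qed

theorem solution_unique_up_to_scalar:
  assumes "mu_rho \<le> 0"
    and f: "ode_sol s_xi s_rho mu_xi kappa delta f f' f''" "prop_P f f'"
    and g: "ode_sol s_xi s_rho mu_xi kappa delta g g' g''" "prop_P g g'"
  shows "\<exists>K>0. \<forall>x\<ge>0. g x = K * f x"
proof -
  have f_deriv: "\<And>x. 0 \<le> x \<Longrightarrow> (f has_real_derivative f' x) (at x within {0..})"
    and g_deriv: "\<And>x. 0 \<le> x \<Longrightarrow> (g has_real_derivative g' x) (at x within {0..})"
    using f(1) g(1) by (auto simp: ode_sol_iff)
  have "\<exists>C. \<forall>x\<in>{0..}. exp (scale_exponent x) * (f x * g' x - f' x * g x) = C"
    by (rule abel_identity[where P = a2 and Q = a1 and R = "\<lambda>_. - 2 * delta"])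
      (use f(1) g(1) in \<open>auto simp: ode_sol_iff a2_nonzero intro!: derivative_eq_intros
        has_field_derivative_at_within[OF scale_exponent_has_derivative]\<close>)
  then obtain C where wronskian: "\<And>x. 0 \<le> x \<Longrightarrow> f x * g' x - f' x * g x = C * exp (- scale_exponent x)"
    by (force simp: exp_minus field_simps)
  have "C = 0"
  proof (rule ccontr)
    assume "C \<noteq> 0"
    then consider "C > 0" | "- C > 0"
      by linarith
    then show False
    proof cases
      case 1
      then show False
        using wronskian_ne_pos_multiple_of_scale_density[OF \<open>mu_rho \<le> 0\<close> _ f_deriv f(2) g_deriv g(2)]
          wronskian by blast
    next
      case 2
      have "g x * f' x - g' x * f x = - C * exp (- scale_exponent x)" if "0 \<le> x" for x
        using wronskian[OF that] by (simp add: algebra_simps)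
      with 2 show False
        using wronskian_ne_pos_multiple_of_scale_density[OF \<open>mu_rho \<le> 0\<close> _ g_deriv g(2) f_deriv f(2)]
        by blast
    qed
  qed
  have f_pos: "\<And>x. 0 \<le> x \<Longrightarrow> 0 < f x" and "0 < g 0"
    using f(2) g(2) by (auto simp: prop_P_def)
  have "\<exists>K. \<forall>x\<in>{0..}. g x = K * f x"
    by (rule const_multiple_if_wronskian_zero[of "{0..}" f f' g g'])
      (use f_deriv g_deriv f_pos wronskian \<open>C = 0\<close> in \<open>auto simp: less_imp_neq[THEN not_sym]\<close>)
  then obtain K where K: "\<forall>x\<in>{0..}. g x = K * f x"
    by blast
  have "0 < K * f 0"
    using K \<open>0 < g 0\<close> by simp
  then have "K > 0"
    using f_pos[of 0] by (simp add: zero_less_mult_iff)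
  with K show ?thesis
    by auto
qed

subsection \<open>Existence\<close>

definition lam :: real where
  "lam = (sqrt (mu_rho^2 + 2 * delta * s_rho^2) - mu_rho) / s_rho^2"

lemma lam_pos: "lam > 0"
proof -
  have "sqrt (mu_rho^2) < sqrt (mu_rho^2 + 2 * delta * s_rho^2)"
    using delta_pos s_rho_pos by (intro real_sqrt_less_mono) simp
  then show ?thesis
    using s_rho_pos by (simp add: lam_def)
qed

lemma lam_root: "s_rho^2 * lam^2 + 2 * mu_rho * lam = 2 * delta"
proof -
  have "(s_rho^2 * lam + mu_rho)^2 = mu_rho^2 + 2 * delta * s_rho^2"
    using s_rho_pos delta_pos by (simp add: lam_def)
  then have "s_rho^2 * (s_rho^2 * lam^2 + 2 * mu_rho * lam) = s_rho^2 * (2 * delta)"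
    by (simp add: power2_eq_square algebra_simps)
  then show ?thesis
    using s_rho_pos by simp
qed

definition p :: real where
  "p = lam + kappa / s_rho^2"

lemma lam_add_one_less_two_p: "2 * p > lam + 1"
proof -
  have "\<bar>mu_rho\<bar> < sqrt (mu_rho^2 + 2 * delta * s_rho^2)"
    using real_sqrt_less_mono[of "mu_rho^2" "mu_rho^2 + 2 * delta * s_rho^2"] delta_pos s_rho_pos
    by simp
  then have "0 < (mu_rho + sqrt (mu_rho^2 + 2 * delta * s_rho^2)) / s_rho^2"
    using s_rho_pos by (simp add: abs_less_iff)
  moreover have "2 * p - (lam + 1) = (mu_rho + sqrt (mu_rho^2 + 2 * delta * s_rho^2)) / s_rho^2"
    using s_rho_pos unfolding p_def lam_def by (simp add: kappa_eq field_simps)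
  ultimately show ?thesis
    by linarith
qed

text \<open>The solution is the limit of \<open>trunc_transform lam w\<close>, i.e. the integral of
  \<open>w (x + u) * u powr lam\<close> over \<open>u \<ge> 0\<close>.\<close>
definition w :: "real \<Rightarrow> real" where
  "w s = exp (- (lam * ln (a2 s) + scale_exponent s))"

definition q1 :: "real \<Rightarrow> real" where
  "q1 s = 2 * lam * s_rho^2 * s + a1 s"

definition q2 :: "real \<Rightarrow> real" where
  "q2 s = (q1 s)^2 + 2 * s_rho^2 * s * q1 s - 2 * p * s_rho^2 * a2 s"

definition w1 :: "real \<Rightarrow> real" where
  "w1 s = - q1 s * w s / a2 s"

definition w2 :: "real \<Rightarrow> real" where
  "w2 s = q2 s * w s / (a2 s)^2"

lemma w_pos: "w s > 0"
  by (simp add: w_def)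

lemma w_eq_powr: "w s = a2 s powr (- p) * exp (- theta * arctan (s_rho * s / s_xi))"
proof -
  have "w s = exp (- lam * ln (a2 s)) * exp (- scale_exponent s)"
    by (simp add: w_def flip: exp_add)
  also have "\<dots> = a2 s powr (- lam) * exp (- scale_exponent s)"
    using a2_pos[of s] by (simp add: powr_def)
  finally show ?thesis
    by (simp add: exp_neg_scale_exponent_eq p_def powr_add[symmetric] diff_divide_distrib)
qed

lemma w_has_derivative: "(w has_real_derivative w1 s) (at s)"
proof -
  have "((\<lambda>s. lam * ln (a2 s) + scale_exponent s) has_real_derivative q1 s / a2 s) (at s)"
    using a2_pos[of s] by (auto intro!: derivative_eq_intros simp: q1_def add_divide_distrib)
  from DERIV_chain2[OF DERIV_exp DERIV_minus[OF this]]
  have "(w has_real_derivative w s * - (q1 s / a2 s)) (at s)"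
    unfolding w_def[abs_def] .
  then show ?thesis
    by (simp add: w1_def mult.commute)
qed

lemma w1_has_derivative: "(w1 has_real_derivative w2 s) (at s)"
proof -
  have "(q1 has_real_derivative 2 * p * s_rho^2) (at s)"
    unfolding q1_def[abs_def] a1_def using s_rho_pos
    by (auto intro!: derivative_eq_intros simp: p_def field_simps)
  then show ?thesis
    unfolding w1_def[abs_def] using a2_pos[of s]
    by (auto intro!: derivative_eq_intros w_has_derivative
        simp: w2_def w1_def q2_def field_simps power2_eq_square)
qed

lemma continuous_on_w: "continuous_on UNIV w"
  using w_has_derivative by (intro has_real_derivative_imp_continuous_on) auto

lemma continuous_on_w1: "continuous_on UNIV w1"
  using w1_has_derivative by (intro has_real_derivative_imp_continuous_on) auto

lemma continuous_on_w_comp [continuous_intros]: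
  "continuous_on S g \<Longrightarrow> continuous_on S (\<lambda>x. w (g x))"
  by (rule continuous_on_compose2[OF continuous_on_w]) auto

lemma continuous_on_w1_comp [continuous_intros]:
  "continuous_on S g \<Longrightarrow> continuous_on S (\<lambda>x. w1 (g x))"
  by (rule continuous_on_compose2[OF continuous_on_w1]) auto

lemma w_deriv [derivative_intros]:
  "(g has_real_derivative g') (at x within S) \<Longrightarrow>
    ((\<lambda>x. w (g x)) has_real_derivative w1 (g x) * g') (at x within S)"
  by (rule DERIV_chain2[OF w_has_derivative])

lemma w1_deriv [derivative_intros]:
  "(g has_real_derivative g') (at x within S) \<Longrightarrow>
    ((\<lambda>x. w1 (g x)) has_real_derivative w2 (g x) * g') (at x within S)"
  by (rule DERIV_chain2[OF w1_has_derivative])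

lemma continuous_on_w2: "continuous_on UNIV w2"
  unfolding w2_def[abs_def] q2_def q1_def a1_def
  by (intro continuous_intros continuous_on_w continuous_on_a2) (simp add: a2_nonzero)

lemma a2_lower_bound: "min (s_xi^2) (s_rho^2) / 2 * (1 + s)^2 \<le> a2 s"
proof -
  have "(1 + s)^2 \<le> 2 * (1 + s^2)"
    using zero_le_power2[of "1 - s"] by (simp add: power2_eq_square algebra_simps)
  then have "min (s_xi^2) (s_rho^2) * (1 + s)^2 \<le> min (s_xi^2) (s_rho^2) * (2 * (1 + s^2))"
    by (rule mult_left_mono) simp
  then have "min (s_xi^2) (s_rho^2) / 2 * (1 + s)^2 \<le> min (s_xi^2) (s_rho^2) * (1 + s^2)"
    by linarith
  also have "\<dots> \<le> a2 s"
    by (simp add: a2_def distrib_left add_mono mult_right_mono)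
  finally show ?thesis .
qed

lemma abs_quadratic_le_a2:
  assumes "\<And>s. P s = \<alpha> + \<beta> * s + \<gamma> * s^2"
  shows "\<exists>K. \<forall>s\<ge>0. \<bar>P s\<bar> \<le> K * a2 s"
proof (intro exI allI impI)
  define m where "m = min (s_xi^2) (s_rho^2) / 2"
  have "m > 0"
    using s_xi_pos s_rho_pos by (simp add: m_def)
  fix s :: real assume "0 \<le> s"
  have "\<bar>P s\<bar> \<le> \<bar>\<alpha>\<bar> + \<bar>\<beta> * s\<bar> + \<bar>\<gamma> * s^2\<bar>"
    unfolding assms using abs_triangle_ineq[of "\<alpha> + \<beta> * s" "\<gamma> * s^2"] abs_triangle_ineq[of \<alpha> "\<beta> * s"]
    by linarith
  also have "\<dots> = \<bar>\<alpha>\<bar> + \<bar>\<beta>\<bar> * s + \<bar>\<gamma>\<bar> * s^2"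
    using \<open>0 \<le> s\<close> by (simp add: abs_mult)
  also have "\<dots> \<le> (\<bar>\<alpha>\<bar> + \<bar>\<beta>\<bar> + \<bar>\<gamma>\<bar>) * (1 + s)^2"
    using \<open>0 \<le> s\<close>
    by (simp add: power2_eq_square algebra_simps add_mono mult_left_mono mult_nonneg_nonneg)
  also have "\<dots> \<le> (\<bar>\<alpha>\<bar> + \<bar>\<beta>\<bar> + \<bar>\<gamma>\<bar>) * (a2 s / m)"
  proof (rule mult_left_mono)
    show "(1 + s)^2 \<le> a2 s / m"
      using a2_lower_bound[of s] \<open>m > 0\<close> by (simp add: m_def[symmetric] pos_le_divide_eq mult.commute)
  qed simp
  finally show "\<bar>P s\<bar> \<le> (\<bar>\<alpha>\<bar> + \<bar>\<beta>\<bar> + \<bar>\<gamma>\<bar>) / m * a2 s"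
    by simp
qed

lemma w_decay: "\<exists>C. \<forall>s\<ge>0. \<bar>w s\<bar> \<le> C * (1 + s) powr (- 2 * p)"
proof (intro exI allI impI)
  define m where "m = min (s_xi^2) (s_rho^2) / 2"
  have "m > 0"
    using s_xi_pos s_rho_pos by (simp add: m_def)
  have "p > 0"
    using lam_add_one_less_two_p lam_pos by simp
  fix s :: real assume "0 \<le> s"
  have "0 < m * (1 + s)^2"
    using \<open>m > 0\<close> \<open>0 \<le> s\<close> by simp
  then have "a2 s powr (- p) \<le> (m * (1 + s)^2) powr (- p)"
    using a2_lower_bound[of s, folded m_def] \<open>p > 0\<close> by (intro powr_mono2') auto
  also have "\<dots> = m powr (- p) * (1 + s) powr (- 2 * p)"
  proof -
    have "(1 + s)^2 = (1 + s) powr 2"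
      using \<open>0 \<le> s\<close> by (simp add: powr_numeral)
    then have "((1 + s)^2) powr (- p) = (1 + s) powr (- 2 * p)"
      by (simp add: powr_powr)
    then show ?thesis
      using \<open>m > 0\<close> \<open>0 \<le> s\<close> by (simp add: powr_mult)
  qed
  finally have "a2 s powr (- p) \<le> m powr (- p) * (1 + s) powr (- 2 * p)" .
  moreover have "exp (- theta * arctan (s_rho * s / s_xi)) \<le> exp (\<bar>theta\<bar> * pi / 2)"
    using abs_theta_arctan_le[of "s_rho * s / s_xi"] by simp
  ultimately have "w s \<le> m powr (- p) * (1 + s) powr (- 2 * p) * exp (\<bar>theta\<bar> * pi / 2)"
    unfolding w_eq_powr by (intro mult_mono) auto
  then show "\<bar>w s\<bar> \<le> m powr (- p) * exp (\<bar>theta\<bar> * pi / 2) * (1 + s) powr (- 2 * p)"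
    using w_pos[of s] by (simp add: mult_ac)
qed

lemma decay_if_le_multiple_of_w:
  assumes "\<And>s. 0 \<le> s \<Longrightarrow> \<bar>h s\<bar> \<le> K * w s"
  shows "\<exists>C. \<forall>s\<ge>0. \<bar>h s\<bar> \<le> C * (1 + s) powr (- 2 * p)"
proof -
  obtain C where C: "\<And>s. 0 \<le> s \<Longrightarrow> \<bar>w s\<bar> \<le> C * (1 + s) powr (- 2 * p)"
    using w_decay by blast
  have "\<bar>h s\<bar> \<le> K * C * (1 + s) powr (- 2 * p)" if "0 \<le> s" for s
  proof -
    have "0 \<le> K * w 0"
      using assms[of 0] abs_ge_zero order_trans by blast
    then have "0 \<le> K"
      using w_pos[of 0] by (simp add: zero_le_mult_iff)
    then show ?thesis
      using assms[OF that] mult_left_mono[OF C[OF that] \<open>0 \<le> K\<close>] w_pos[of s] by (simp add: mult.assoc)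
  qed
  then show ?thesis
    by blast
qed

lemma w1_decay: "\<exists>C. \<forall>s\<ge>0. \<bar>w1 s\<bar> \<le> C * (1 + s) powr (- 2 * p)"
proof -
  obtain K where K: "\<And>s. 0 \<le> s \<Longrightarrow> \<bar>q1 s\<bar> \<le> K * a2 s"
    using abs_quadratic_le_a2[of q1 "2 * mu_xi" "2 * lam * s_rho^2 + 2 * kappa" 0]
    by (auto simp: q1_def a1_def algebra_simps)
  have "\<bar>w1 s\<bar> \<le> K * w s" if "0 \<le> s" for s
    using K[OF that] w_pos[of s] a2_pos[of s]
    by (simp add: w1_def abs_mult abs_divide pos_divide_le_eq mult_right_mono mult.assoc mult.left_commute)
  then show ?thesis
    by (rule decay_if_le_multiple_of_w)
qed

lemma w2_decay: "\<exists>C. \<forall>s\<ge>0. \<bar>w2 s\<bar> \<le> C * (1 + s) powr (- 2 * p)"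
proof -
  define A where "A = 2 * mu_xi"
  define B where "B = 2 * p * s_rho^2"
  have "q1 s = A + B * s" for s
    using s_rho_pos by (simp add: q1_def a1_def A_def B_def p_def algebra_simps)
  then have "q2 s = (A^2 - B * s_xi^2) + (2 * A * B + 2 * s_rho^2 * A) * s + (B^2 + B * s_rho^2) * s^2"
    for s
    by (simp add: q2_def a2_def B_def power2_eq_square algebra_simps)
  then obtain K where K: "\<And>s. 0 \<le> s \<Longrightarrow> \<bar>q2 s\<bar> \<le> K * a2 s"
    using abs_quadratic_le_a2[of q2] by blast
  have "\<bar>w2 s\<bar> \<le> K / s_xi^2 * w s" if "0 \<le> s" for s
  proof -
    have "0 \<le> K * a2 s"
      using K[OF that] abs_ge_zero order_trans by blast
    then have "0 \<le> K"
      using a2_pos[of s] by (simp add: zero_le_mult_iff)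
    have "\<bar>w2 s\<bar> = \<bar>q2 s\<bar> * w s / (a2 s)^2"
      using w_pos[of s] by (simp add: w2_def abs_mult abs_divide)
    also have "\<dots> \<le> K * a2 s * w s / (a2 s)^2"
      using K[OF that] w_pos[of s] by (intro divide_right_mono mult_right_mono) auto
    also have "\<dots> = K * w s / a2 s"
      using a2_pos[of s] by (simp add: power2_eq_square)
    also have "\<dots> \<le> K * w s / s_xi^2"
      using a2_ge[of s] a2_pos[of s] s_xi_pos w_pos[of s] \<open>0 \<le> K\<close> by (intro divide_left_mono) auto
    finally show ?thesis
      by simp
  qed
  then show ?thesis
    by (rule decay_if_le_multiple_of_w)
qed

text \<open>The differential operator applied to \<open>trunc_transform lam w n x\<close> equals
  \<open>boundary_term x n\<close> (integration by parts in u).\<close>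
definition boundary_term :: "real \<Rightarrow> real \<Rightarrow> real" where
  "boundary_term x u =
    u powr lam * (lam * s_rho^2 * (2 * x + u) * w (x + u) + a2 x * w1 (x + u) + a1 x * w (x + u))"

lemma boundary_identity:
  "lam * (lam * s_rho^2 * (2 * x + u) * w (x + u) + a2 x * w1 (x + u) + a1 x * w (x + u))
     + u * (lam * s_rho^2 * w (x + u) + lam * s_rho^2 * (2 * x + u) * w1 (x + u))
     + 2 * delta * u * w (x + u) = 0"
proof -
  define s where "s = x + u"
  have poly: "lam * (lam * s_rho^2 * (2 * x + u) * a2 s - a2 x * q1 s + a1 x * a2 s)
      + u * (lam * s_rho^2 * a2 s - lam * s_rho^2 * (2 * x + u) * q1 s) + 2 * delta * u * a2 s = 0"
    unfolding lam_root[symmetric] s_def a2_def a1_def q1_def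
    by (simp add: kappa_eq power2_eq_square field_simps)
  have "lam * (lam * s_rho^2 * (2 * x + u) * w s + a2 x * w1 s + a1 x * w s)
      + u * (lam * s_rho^2 * w s + lam * s_rho^2 * (2 * x + u) * w1 s) + 2 * delta * u * w s
    = w s / a2 s * (lam * (lam * s_rho^2 * (2 * x + u) * a2 s - a2 x * q1 s + a1 x * a2 s)
      + u * (lam * s_rho^2 * a2 s - lam * s_rho^2 * (2 * x + u) * q1 s) + 2 * delta * u * a2 s)"
    using a2_nonzero[of s] by (simp add: w1_def field_simps)
  also have "\<dots> = 0"
    unfolding poly by simp
  finally show ?thesis
    by (simp only: s_def)
qed

lemma boundary_term_deriv:
  assumes "0 < u"
  shows "(boundary_term x has_real_derivative
           u powr lam * (a2 x * w2 (x + u) + a1 x * w1 (x + u) - 2 * delta * w (x + u))) (at u)"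
proof -
  define H where "H u = lam * s_rho^2 * (2 * x + u) * w (x + u) + a2 x * w1 (x + u) + a1 x * w (x + u)" for u
  define H' where "H' = lam * s_rho^2 * w (x + u) + lam * s_rho^2 * (2 * x + u) * w1 (x + u)
      + a2 x * w2 (x + u) + a1 x * w1 (x + u)"
  have "(H has_real_derivative H') (at u)"
    unfolding H_def[abs_def] H'_def by (auto intro!: derivative_eq_intros simp: algebra_simps)
  from DERIV_mult[OF has_real_derivative_powr[OF assms, of lam] this]
  have "(boundary_term x has_real_derivative lam * u powr (lam - 1) * H u + H' * u powr lam) (at u)"
    unfolding boundary_term_def[abs_def] H_def .
  moreover have "lam * u powr (lam - 1) * H u + H' * u powr lam
      = u powr lam * (a2 x * w2 (x + u) + a1 x * w1 (x + u) - 2 * delta * w (x + u))"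
  proof -
    have "u powr (lam - 1) = u powr lam / u"
      using assms by (simp add: powr_diff)
    then have "lam * u powr (lam - 1) * H u + H' * u powr lam = u powr lam * (lam * H u / u + H')"
      by (simp add: algebra_simps)
    also have "lam * H u / u = - (lam * s_rho^2 * w (x + u) + lam * s_rho^2 * (2 * x + u) * w1 (x + u))
        - 2 * delta * w (x + u)"
      using boundary_identity[of x u] assms by (simp add: H_def field_simps)
    finally show ?thesis
      by (simp add: H'_def algebra_simps)
  qed
  ultimately show ?thesis
    by simp
qed

lemma continuous_on_boundary_term: "continuous_on {0..} (boundary_term x)"
  unfolding boundary_term_def[abs_def] using lam_pos
  by (intro continuous_intros continuous_on_powr') auto

lemma trunc_transform_residual:
  assumes "0 \<le> x"
  shows "a2 x * trunc_transform lam w2 n x + a1 x * trunc_transform lam w1 n x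
           - 2 * delta * trunc_transform lam w n x = boundary_term x (real n)"
proof -
  define k where "k h u = h (x + u) * u powr lam" for h u
  have transform: "(k h has_integral trunc_transform lam h n x) {0..real n}" if "continuous_on UNIV h" for h
    unfolding trunc_transform_def k_def
    by (intro integrable_integral shifted_powr_kernel_integrable[OF that lam_pos assms]) simp
  have "((\<lambda>u. a2 x * k w2 u + a1 x * k w1 u - 2 * delta * k w u) has_integral
      a2 x * trunc_transform lam w2 n x + a1 x * trunc_transform lam w1 n x
        - 2 * delta * trunc_transform lam w n x) {0..real n}"
    by (intro has_integral_diff has_integral_add has_integral_mult_right transform
        continuous_on_w continuous_on_w1 continuous_on_w2)
  moreover have "((\<lambda>u. a2 x * k w2 u + a1 x * k w1 u - 2 * delta * k w u) has_integral
      boundary_term x (real n) - boundary_term x 0) {0..real n}"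
  proof (rule fundamental_theorem_of_calculus_interior)
    show "continuous_on {0..real n} (boundary_term x)"
      using continuous_on_boundary_term by (rule continuous_on_subset) auto
    fix u assume "u \<in> {0<..<real n}"
    then show "(boundary_term x has_vector_derivative a2 x * k w2 u + a1 x * k w1 u - 2 * delta * k w u) (at u)"
      using boundary_term_deriv[of u x]
      by (simp add: k_def has_real_derivative_iff_has_vector_derivative[symmetric] algebra_simps)
  qed simp
  moreover have "boundary_term x 0 = 0"
    by (simp add: boundary_term_def)
  ultimately show ?thesis
    by (simp add: has_integral_unique)
qed

lemma boundary_term_tendsto_zero:
  assumes "0 \<le> x"
  shows "(\<lambda>n. boundary_term x (real n)) \<longlonglongrightarrow> 0"
proof -
  obtain C0 C1 where C0: "\<And>s. 0 \<le> s \<Longrightarrow> \<bar>w s\<bar> \<le> C0 * (1 + s) powr (- 2 * p)"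
    and C1: "\<And>s. 0 \<le> s \<Longrightarrow> \<bar>w1 s\<bar> \<le> C1 * (1 + s) powr (- 2 * p)"
    using w_decay w1_decay by blast
  define C where "C = C0 + C1"
  define M where "M = lam * s_rho^2 * (2 * x + 1) + a2 x + \<bar>a1 x\<bar>"
  have w_le: "\<bar>w (x + u)\<bar> \<le> C * (1 + u) powr (- 2 * p)"
    and w1_le: "\<bar>w1 (x + u)\<bar> \<le> C * (1 + u) powr (- 2 * p)"
    if "0 \<le> u" for u
  proof -
    have "0 \<le> C0" "0 \<le> C1"
      using C0[of 0] C1[of 0] by (auto intro: order_trans[OF abs_ge_zero])
    have decay: "(1 + (x + u)) powr (- 2 * p) \<le> (1 + u) powr (- 2 * p)"
      using that assms lam_add_one_less_two_p lam_pos by (intro powr_mono2') auto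
    have "\<bar>w (x + u)\<bar> \<le> C0 * (1 + u) powr (- 2 * p)"
      using order_trans[OF C0[of "x + u"] mult_left_mono[OF decay \<open>0 \<le> C0\<close>]] that assms by simp
    moreover have "\<bar>w1 (x + u)\<bar> \<le> C1 * (1 + u) powr (- 2 * p)"
      using order_trans[OF C1[of "x + u"] mult_left_mono[OF decay \<open>0 \<le> C1\<close>]] that assms by simp
    moreover have "0 \<le> C0 * (1 + u) powr (- 2 * p)" "0 \<le> C1 * (1 + u) powr (- 2 * p)"
      using \<open>0 \<le> C0\<close> \<open>0 \<le> C1\<close> by simp_all
    ultimately show "\<bar>w (x + u)\<bar> \<le> C * (1 + u) powr (- 2 * p)"
      "\<bar>w1 (x + u)\<bar> \<le> C * (1 + u) powr (- 2 * p)"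
      unfolding C_def distrib_right by linarith+
  qed
  have bound: "\<bar>boundary_term x u\<bar> \<le> M * C * (1 + u) powr (lam + 1 - 2 * p)" if "0 \<le> u" for u
  proof -
    have "\<bar>lam * s_rho^2 * (2 * x + u) * w (x + u) + a2 x * w1 (x + u) + a1 x * w (x + u)\<bar>
        \<le> lam * s_rho^2 * (2 * x + u) * \<bar>w (x + u)\<bar> + a2 x * \<bar>w1 (x + u)\<bar> + \<bar>a1 x\<bar> * \<bar>w (x + u)\<bar>"
      using that assms lam_pos a2_pos[of x] by (auto simp: abs_mult intro!: order_trans[OF abs_triangle_ineq])
    also have "\<dots> \<le> (lam * s_rho^2 * (2 * x + u) + a2 x + \<bar>a1 x\<bar>) * (C * (1 + u) powr (- 2 * p))"
      using w_le[OF that] w1_le[OF that] that assms lam_pos a2_pos[of x]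
      by (simp add: distrib_right add_mono mult_left_mono)
    also have "\<dots> \<le> M * (1 + u) * (C * (1 + u) powr (- 2 * p))"
      using that assms lam_pos a2_pos[of x] w_le[OF that]
      by (intro mult_right_mono) (auto simp: M_def algebra_simps intro: order_trans[OF abs_ge_zero])
    finally have "\<bar>boundary_term x u\<bar> \<le> u powr lam * (M * (1 + u) * (C * (1 + u) powr (- 2 * p)))"
      by (simp add: boundary_term_def abs_mult mult_left_mono)
    also have "\<dots> \<le> (1 + u) powr lam * (M * (1 + u) * (C * (1 + u) powr (- 2 * p)))"
      using that lam_pos w_le[OF that] a2_pos[of x] assms
      by (intro mult_right_mono powr_mono2)
        (auto simp: M_def intro!: mult_nonneg_nonneg intro: order_trans[OF abs_ge_zero])
    also have "\<dots> = M * C * (1 + u) powr (lam + 1 - 2 * p)"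
      using that by (simp add: powr_add powr_diff powr_minus field_simps)
    finally show ?thesis .
  qed
  have "(\<lambda>n. M * C * (1 + real n) powr (lam + 1 - 2 * p)) \<longlonglongrightarrow> 0"
  proof -
    have "filterlim (\<lambda>n. 1 + real n) at_top sequentially"
      by (intro filterlim_tendsto_add_at_top[OF tendsto_const] filterlim_real_sequentially)
    then have "(\<lambda>n. (1 + real n) powr (lam + 1 - 2 * p)) \<longlonglongrightarrow> 0"
      by (rule tendsto_neg_powr[rotated]) (use lam_add_one_less_two_p in simp)
    then show ?thesis
      by (rule tendsto_mult_right_zero)
  qed
  moreover have "\<forall>\<^sub>F n in sequentially.
      norm (boundary_term x (real n)) \<le> M * C * (1 + real n) powr (lam + 1 - 2 * p)"
    using bound by (intro always_eventually allI) simp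
  ultimately show ?thesis
    by (rule Lim_null_comparison[rotated])
qed

lemma trunc_transform_limits:
  obtains f f' f'' where
    "\<And>x. 0 \<le> x \<Longrightarrow> (\<lambda>n. trunc_transform lam w n x) \<longlonglongrightarrow> f x"
    "\<And>x. 0 \<le> x \<Longrightarrow> (\<lambda>n. trunc_transform lam w1 n x) \<longlonglongrightarrow> f' x"
    "\<And>x. 0 \<le> x \<Longrightarrow> (\<lambda>n. trunc_transform lam w2 n x) \<longlonglongrightarrow> f'' x"
    "\<And>x. 0 \<le> x \<Longrightarrow> (f has_real_derivative f' x) (at x within {0..})"
    "\<And>x. 0 \<le> x \<Longrightarrow> (f' has_real_derivative f'' x) (at x within {0..})"
proof -
  have uniform: "\<exists>L. uniform_limit {0..} (trunc_transform lam h) L sequentially"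
    if "continuous_on UNIV h" "\<exists>C. \<forall>s\<ge>0. \<bar>h s\<bar> \<le> C * (1 + s) powr (- 2 * p)" for h
    using that trunc_transform_uniform_limit[OF that(1) lam_pos lam_add_one_less_two_p] by auto
  obtain L1 L2 where
    U1: "uniform_limit {0..} (trunc_transform lam w1) L1 sequentially" and
    U2: "uniform_limit {0..} (trunc_transform lam w2) L2 sequentially"
    using uniform[OF continuous_on_w1 w1_decay] uniform[OF continuous_on_w2 w2_decay] by blast
  obtain L0 where "uniform_limit {0..} (trunc_transform lam w) L0 sequentially"
    using uniform[OF continuous_on_w w_decay] by blast
  then have conv0: "convergent (\<lambda>n. trunc_transform lam w n 0)"
    by (auto simp: convergent_def intro: tendsto_uniform_limitI)
  have conv1: "convergent (\<lambda>n. trunc_transform lam w1 n 0)"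
    using U1 by (auto simp: convergent_def intro: tendsto_uniform_limitI)
  have "\<exists>f'. \<forall>x\<in>{0..}. (\<lambda>n. trunc_transform lam w1 n x) \<longlonglongrightarrow> f' x \<and>
      (f' has_real_derivative L2 x) (at x within {0..})"
    by (rule has_field_derivative_sequence[of "{0..}" "trunc_transform lam w1", OF _ _ U2 _ conv1])
      (auto intro: trunc_transform_deriv[OF w1_has_derivative continuous_on_w2 lam_pos])
  then obtain f' where f': "\<forall>x\<in>{0..}. (\<lambda>n. trunc_transform lam w1 n x) \<longlonglongrightarrow> f' x \<and>
      (f' has_real_derivative L2 x) (at x within {0..})"
    by blast
  have "\<exists>f. \<forall>x\<in>{0..}. (\<lambda>n. trunc_transform lam w n x) \<longlonglongrightarrow> f x \<and>
      (f has_real_derivative L1 x) (at x within {0..})"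
    by (rule has_field_derivative_sequence[of "{0..}" "trunc_transform lam w", OF _ _ U1 _ conv0])
      (auto intro: trunc_transform_deriv[OF w_has_derivative continuous_on_w1 lam_pos])
  then obtain f where f: "\<forall>x\<in>{0..}. (\<lambda>n. trunc_transform lam w n x) \<longlonglongrightarrow> f x \<and>
      (f has_real_derivative L1 x) (at x within {0..})"
    by blast
  have "L1 x = f' x" if "0 \<le> x" for x
    using LIMSEQ_unique[OF tendsto_uniform_limitI[OF U1] conjunct1[OF f'[rule_format]]] that by simp
  with f f' show ?thesis
    using that[of f f' L2] tendsto_uniform_limitI[OF U2] by auto
qed

theorem solution_exists: "\<exists>f f' f''. ode_sol s_xi s_rho mu_xi kappa delta f f' f'' \<and> prop_P f f'"
proof -
  obtain f f' f'' where
    lim: "\<And>x. 0 \<le> x \<Longrightarrow> (\<lambda>n. trunc_transform lam w n x) \<longlonglongrightarrow> f x"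
      "\<And>x. 0 \<le> x \<Longrightarrow> (\<lambda>n. trunc_transform lam w1 n x) \<longlonglongrightarrow> f' x"
      "\<And>x. 0 \<le> x \<Longrightarrow> (\<lambda>n. trunc_transform lam w2 n x) \<longlonglongrightarrow> f'' x"
    and deriv: "\<And>x. 0 \<le> x \<Longrightarrow> (f has_real_derivative f' x) (at x within {0..})"
      "\<And>x. 0 \<le> x \<Longrightarrow> (f' has_real_derivative f'' x) (at x within {0..})"
    using trunc_transform_limits by blast
  have "a2 x * f'' x + a1 x * f' x - 2 * delta * f x = 0" if "0 \<le> x" for x
  proof (rule LIMSEQ_unique)
    show "(\<lambda>n. a2 x * trunc_transform lam w2 n x + a1 x * trunc_transform lam w1 n x
        - 2 * delta * trunc_transform lam w n x) \<longlonglongrightarrow> a2 x * f'' x + a1 x * f' x - 2 * delta * f x"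
      by (intro tendsto_intros lim that)
    show "(\<lambda>n. a2 x * trunc_transform lam w2 n x + a1 x * trunc_transform lam w1 n x
        - 2 * delta * trunc_transform lam w n x) \<longlonglongrightarrow> 0"
      unfolding trunc_transform_residual[OF that] by (rule boundary_term_tendsto_zero[OF that])
  qed
  then have "ode_sol s_xi s_rho mu_xi kappa delta f f' f''"
    using deriv by (simp add: ode_sol_iff)
  moreover have "f x > 0" if "0 \<le> x" for x
    by (rule trunc_transform_limit_pos[OF continuous_on_w lam_pos w_pos lim(1)[OF that] that])
  moreover have "f' x \<le> 0" if "0 < x" for x
  proof (rule deriv_nonpos_if_antitone_right)
    show "(f has_real_derivative f' x) (at x)"
      using deriv(1)[of x] that by (intro has_real_derivative_at_if_within_atLeast[of 0]) auto
    show "f y \<le> f x" if "x \<le> y" for y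
      using trunc_transform_limit_antitone[OF continuous_on_w lam_pos _ lim(1), of x y]
        w_pos \<open>0 < x\<close> that by (simp add: less_imp_le)
  qed
  ultimately show ?thesis
    by (auto simp: prop_P_def)
qed

end

theorem lemma3:
  fixes mu_xi mu_rho s_xi s_rho kappa_rho delta :: real
  assumes "s_xi > 0" and "s_rho > 0"
    and "kappa_rho = mu_rho + s_rho^2 / 2"
    and "delta > 0"
  shows "\<exists>f f' f''. ode_sol s_xi s_rho mu_xi kappa_rho delta f f' f'' \<and> prop_P f f' \<and>
           (mu_rho \<le> 0 \<longrightarrow>
              (\<forall>g g' g''. ode_sol s_xi s_rho mu_xi kappa_rho delta g g' g'' \<and> prop_P g g' \<longrightarrow>
                 (\<exists>K>0. \<forall>x\<ge>0. g x = K * f x)))"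
proof -
  interpret half_line_ode s_xi s_rho mu_xi mu_rho kappa_rho delta
    using assms by unfold_locales
  obtain f f' f'' where "ode_sol s_xi s_rho mu_xi kappa_rho delta f f' f''" "prop_P f f'"
    using solution_exists by blast
  then show ?thesis
    using solution_unique_up_to_scalar by blast
qed

end
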